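(* Let $\xi\sim\mathcal N_p(\mu,\Sigma)$ with $\Sigma$ positive semidefinite and $\operatorname{trace}(\Sigma)<1/(4e)$. Then $$\rho_{\rm K}(\xi,\mu)\le\sqrt{-4\operatorname{trace}(\Sigma)\log\{4\operatorname{trace}(\Sigma)\}} .$$
   Context: $\rho_{\rm K}(\xi,\mu)=\inf\{\varepsilon>0:\ \mathbb P(\|\xi-\mu\|>\varepsilon)<\varepsilon\}$ is the Ky Fan distance with respect to the Euclidean norm on $\mathbb R^p$. *)

theory Defs
  imports "HOL-Probability.Probability"
begin

definition ky_fan_dist ::
  "'a measure \<Rightarrow> ('a \<Rightarrow> 'b::real_normed_vector) \<Rightarrow> ('a \<Rightarrow> 'b) \<Rightarrow> real" where
  "ky_fan_dist M X Y =
     Inf {\<epsilon>. 0 < \<epsilon> \<and> measure M {x \<in> space M. norm (X x - Y x) > \<epsilon>} < \<epsilon>}"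

text \<open>xi is distributed as N_p(mu, Sigma) (possibly degenerate), defined via the
  characteristic function: E exp(i t.xi) = exp(i t.mu - t' Sigma t / 2) for all t.\<close>
definition gaussian_vector ::
  "'a measure \<Rightarrow> ('a \<Rightarrow> real^'p) \<Rightarrow> real^'p \<Rightarrow> real^'p^'p \<Rightarrow> bool" where
  "gaussian_vector M \<xi> \<mu> \<Sigma> \<longleftrightarrow>
     \<xi> \<in> borel_measurable M \<and>
     (\<forall>t :: real^'p. (CLINT x|M. cis (t \<bullet> \<xi> x)) =
         cis (t \<bullet> \<mu>) * complex_of_real (exp (- (t \<bullet> (\<Sigma> *v t)) / 2)))"

end

theory Submission imports Defs begin

(* Put X = xi - mu and s = trace Sigma.  Each coordinate X_i has characteristic
   function exp(-t^2 Sigma_ii / 2), so by Levy's uniqueness theorem it is N(0, Sigma_ii); a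
   standard normal Z satisfies E exp(Z^2/4) = sqrt 2, hence E exp(c X_i^2) <= sqrt 2 whenever
   4 c Sigma_ii <= 1.  Writing |X|^2/(4s) as the convex combination, with weights Sigma_ii/s,
   of the quantities X_i^2/(4 Sigma_ii) and using convexity of exp gives the sub-Gaussian bound
   E exp(|X|^2/(4s)) <= sqrt 2.  Markov's inequality then yields
   P(|X| > eps) <= sqrt 2 * exp(-eps^2/(4s)), which for eps^2 = -4s ln(4s) equals sqrt 2 * 4s,
   and this is < eps as soon as 4s < 1/e; so eps bounds the Ky Fan distance. *)

section \<open>Coordinates of a Gaussian vector\<close>

lemma gaussian_coordinate_char:
  fixes \<xi> :: "'a \<Rightarrow> real^'p"
  assumes "gaussian_vector M \<xi> \<mu> \<Sigma>"
  shows "(CLINT x|M. cis (t * (\<xi> x $ i - \<mu> $ i))) = complex_of_real (exp (- (t^2 * \<Sigma>$i$i) / 2))"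
proof -
  define v :: "real^'p" where "v = axis i t"
  have char: "(CLINT x|M. cis (v \<bullet> \<xi> x)) = cis (v \<bullet> \<mu>) * complex_of_real (exp (- (v \<bullet> (\<Sigma> *v v)) / 2))"
    using assms unfolding gaussian_vector_def by blast
  have inner_v: "\<And>y::real^'p. v \<bullet> y = t * y $ i" unfolding v_def by (simp add: inner_axis')
  have quad: "v \<bullet> (\<Sigma> *v v) = t^2 * \<Sigma>$i$i"
    unfolding inner_v
    by (simp add: v_def matrix_vector_mult_def axis_def power2_eq_square if_distrib cong: if_cong)
  have "(CLINT x|M. cis (t * (\<xi> x $ i - \<mu> $ i))) = (CLINT x|M. cis (v \<bullet> \<xi> x) * cis (- (t * \<mu> $ i)))"
    by (rule Bochner_Integration.integral_cong) (auto simp: inner_v cis_mult right_diff_distrib)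
  also have "\<dots> = (CLINT x|M. cis (v \<bullet> \<xi> x)) * cis (- (t * \<mu> $ i))" by simp
  also have "\<dots> = complex_of_real (exp (- (t^2 * \<Sigma>$i$i) / 2))"
    unfolding char quad by (simp add: inner_v cis_mult)
  finally show ?thesis .
qed

lemma psd_diagonal_nonneg:
  fixes \<Sigma> :: "real^'p^'p"
  assumes "\<forall>v :: real^'p. 0 \<le> v \<bullet> (\<Sigma> *v v)"
  shows "0 \<le> \<Sigma>$i$i"
proof -
  have "(\<Sigma> *v axis i 1) $ i = \<Sigma>$i$i"
    by (simp add: matrix_vector_mult_def axis_def if_distrib cong: if_cong)
  then have "axis i 1 \<bullet> (\<Sigma> *v axis i 1) = \<Sigma>$i$i" by (simp add: inner_axis')
  then show ?thesis using assms by metis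
qed

lemma gaussian_vector_measurable:
  assumes "gaussian_vector M \<xi> \<mu> \<Sigma>"
  shows "\<xi> \<in> borel_measurable M"
  using assms unfolding gaussian_vector_def by blast

lemma borel_measurable_vec_nth[measurable (raw)]:
  fixes f :: "'a \<Rightarrow> real^'p"
  assumes "f \<in> borel_measurable M"
  shows "(\<lambda>x. f x $ i) \<in> borel_measurable M"
  by (rule borel_measurable_continuous_on[OF _ assms]) (auto intro: continuous_intros)

section \<open>One-dimensional centred normal laws\<close>

lemma char_distr:
  assumes "Y \<in> borel_measurable M"
  shows "char (distr M borel Y) t = (CLINT x|M. cis (t * Y x))"
  unfolding char_def cis_conv_exp by (subst integral_distr) (use assms in auto)

lemma real_distribution_distr:
  assumes "prob_space M" "Y \<in> borel_measurable M"
  shows "real_distribution (distr M borel Y)"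
  using assms by (simp add: real_distribution_def real_distribution_axioms_def prob_space.prob_space_distr)

(* A random variable with characteristic function 1 vanishes almost surely
   (Levy uniqueness against the Dirac measure at 0). *)
lemma char_one_imp_AE_zero:
  assumes "prob_space M" "X \<in> borel_measurable M"
    and "\<And>t. (CLINT x|M. cis (t * X x)) = 1"
  shows "AE x in M. X x = 0"
proof -
  have dirac: "distr M borel X = return borel 0"
  proof (rule Levy_uniqueness)
    show "real_distribution (distr M borel X)" using assms real_distribution_distr by blast
    show "real_distribution (return borel (0::real))"
      by (simp add: real_distribution_def real_distribution_axioms_def prob_space_return)
    show "char (distr M borel X) = char (return borel 0)"
    proof
      fix t
      have "char (return borel 0) t = 1" unfolding char_def by (simp add: integral_return)
      then show "char (distr M borel X) t = char (return borel 0) t"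
        using assms by (simp add: char_distr)
    qed
  qed
  have "AE y in distr M borel X. y = 0" unfolding dirac by (simp add: AE_return)
  then show ?thesis by (subst (asm) AE_distr_iff) (use assms in auto)
qed

lemma char_normal_imp_std_normal:
  assumes "prob_space M" "X \<in> borel_measurable M" "v > 0"
    and "\<And>t. (CLINT x|M. cis (t * X x)) = complex_of_real (exp (- (t^2 * v) / 2))"
  shows "distr M borel (\<lambda>x. X x / sqrt v) = std_normal_distribution"
proof (rule Levy_uniqueness)
  show "real_distribution (distr M borel (\<lambda>x. X x / sqrt v))"
    using assms by (intro real_distribution_distr) auto
  show "real_distribution std_normal_distribution" by (rule real_dist_normal_dist)
  show "char (distr M borel (\<lambda>x. X x / sqrt v)) = char std_normal_distribution"
  proof
    fix t
    have "char (distr M borel (\<lambda>x. X x / sqrt v)) t = (CLINT x|M. cis ((t / sqrt v) * X x))"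
      using assms by (simp add: char_distr)
    also have "\<dots> = complex_of_real (exp (- ((t / sqrt v)^2 * v) / 2))" by (rule assms(4))
    also have "\<dots> = complex_of_real (exp (- (t^2) / 2))" using assms(3) by (simp add: power_divide)
    finally show "char (distr M borel (\<lambda>x. X x / sqrt v)) t = char std_normal_distribution t"
      by (simp add: char_std_normal_distribution)
  qed
qed

(* E exp(Z^2/4) = sqrt 2 for standard normal Z: the integrand times the density is
   sqrt 2 times the N(0, 2) density. *)
lemma std_normal_exp_square_moment:
  "(\<integral>\<^sup>+ y. ennreal (exp (y^2/4)) \<partial>std_normal_distribution) = ennreal (sqrt 2)"
proof -
  have density_eq: "\<And>y. std_normal_density y * exp (y^2/4) = sqrt 2 * normal_density 0 (sqrt 2) y"
    unfolding normal_density_def by (simp add: real_sqrt_mult exp_add[symmetric] field_simps)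
  interpret N2: prob_space "density lborel (normal_density 0 (sqrt 2))"
    by (rule prob_space_normal_density) simp
  have total: "(\<integral>\<^sup>+ y. ennreal (normal_density 0 (sqrt 2) y) \<partial>lborel) = 1"
    using N2.emeasure_space_1 by (simp add: emeasure_density)
  have "(\<integral>\<^sup>+ y. ennreal (exp (y^2/4)) \<partial>std_normal_distribution)
      = (\<integral>\<^sup>+ y. ennreal (std_normal_density y) * ennreal (exp (y^2/4)) \<partial>lborel)"
    by (subst nn_integral_density) (auto simp: normal_density_nonneg)
  also have "\<dots> = (\<integral>\<^sup>+ y. ennreal (sqrt 2) * ennreal (normal_density 0 (sqrt 2) y) \<partial>lborel)"
    by (simp add: ennreal_mult'[symmetric] normal_density_nonneg density_eq)
  also have "\<dots> = ennreal (sqrt 2)"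
    by (simp add: nn_integral_cmult total)
  finally show ?thesis .
qed

lemma normal_exp_square_moment_le:
  assumes "prob_space M" "X \<in> borel_measurable M" "v > 0" "c \<ge> 0" "4 * c * v \<le> 1"
    and "\<And>t. (CLINT x|M. cis (t * X x)) = complex_of_real (exp (- (t^2 * v) / 2))"
  shows "(\<integral>\<^sup>+ x. ennreal (exp (c * (X x)^2)) \<partial>M) \<le> ennreal (sqrt 2)"
proof -
  have std: "distr M borel (\<lambda>x. X x / sqrt v) = std_normal_distribution"
    using assms by (intro char_normal_imp_std_normal) auto
  have "(\<integral>\<^sup>+ x. ennreal (exp (c * (X x)^2)) \<partial>M) \<le> (\<integral>\<^sup>+ x. ennreal (exp ((X x / sqrt v)^2/4)) \<partial>M)"
  proof (rule nn_integral_mono)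
    fix x
    have "c * (X x)^2 = (c * v) * (X x / sqrt v)^2" using assms(3) by (simp add: power_divide)
    also have "\<dots> \<le> (1/4) * (X x / sqrt v)^2" using assms by (intro mult_right_mono) auto
    finally show "ennreal (exp (c * (X x)^2)) \<le> ennreal (exp ((X x / sqrt v)^2/4))"
      by (intro ennreal_leI) simp
  qed
  also have "\<dots> = (\<integral>\<^sup>+ y. ennreal (exp (y^2/4)) \<partial>distr M borel (\<lambda>x. X x / sqrt v))"
    by (subst nn_integral_distr) (use assms in auto)
  also have "\<dots> = ennreal (sqrt 2)" unfolding std by (rule std_normal_exp_square_moment)
  finally show ?thesis .
qed

(* Convexity of exp: an exponential moment bound K for each f_i transfers to any convex
   combination of the f_i. *)
lemma nn_integral_exp_convex_comb_le:
  fixes f :: "'i \<Rightarrow> 'a \<Rightarrow> real"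
  assumes "finite I" "sum w I = 1" "\<And>i. i \<in> I \<Longrightarrow> w i \<ge> 0"
    and "\<And>i. i \<in> I \<Longrightarrow> f i \<in> borel_measurable M"
    and "\<And>i. i \<in> I \<Longrightarrow> (\<integral>\<^sup>+ x. ennreal (exp (f i x)) \<partial>M) \<le> K"
  shows "(\<integral>\<^sup>+ x. ennreal (exp (\<Sum>i\<in>I. w i * f i x)) \<partial>M) \<le> K"
proof -
  have "(\<integral>\<^sup>+ x. ennreal (exp (\<Sum>i\<in>I. w i * f i x)) \<partial>M)
      \<le> (\<integral>\<^sup>+ x. (\<Sum>i\<in>I. ennreal (w i) * ennreal (exp (f i x))) \<partial>M)"
  proof (rule nn_integral_mono)
    fix x
    have "exp (\<Sum>i\<in>I. w i *\<^sub>R f i x) \<le> (\<Sum>i\<in>I. w i * exp (f i x))"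
      using assms(1-3) by (intro convex_on_sum[OF _ _ exp_convex]) auto
    then show "ennreal (exp (\<Sum>i\<in>I. w i * f i x)) \<le> (\<Sum>i\<in>I. ennreal (w i) * ennreal (exp (f i x)))"
      using assms(3) by (simp add: ennreal_mult[symmetric] sum_ennreal ennreal_leI)
  qed
  also have "\<dots> = (\<Sum>i\<in>I. ennreal (w i) * (\<integral>\<^sup>+ x. ennreal (exp (f i x)) \<partial>M))"
    using assms(4) by (subst nn_integral_sum) (auto simp: nn_integral_cmult)
  also have "\<dots> \<le> (\<Sum>i\<in>I. ennreal (w i) * K)"
    using assms(5) by (intro sum_mono mult_left_mono) auto
  also have "\<dots> = K"
    using assms(2,3) by (simp add: sum_distrib_right[symmetric] sum_ennreal)
  finally show ?thesis .
qed

(* Markov's inequality for exp(lam Y^2): a bound K on E exp(lam Y^2) gives the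
   sub-Gaussian tail P(Y > eps) <= K exp(-lam eps^2). *)
lemma tail_le_exp_square_moment:
  assumes "prob_space M" "Y \<in> borel_measurable M" "lam \<ge> 0" "eps \<ge> 0" "K \<ge> 0"
    and "(\<integral>\<^sup>+ x. ennreal (exp (lam * (Y x)^2)) \<partial>M) \<le> ennreal K"
  shows "measure M {x \<in> space M. Y x > eps} \<le> K * exp (- lam * eps^2)"
proof -
  interpret P: prob_space M by (rule assms(1))
  have "emeasure M {x \<in> space M. Y x > eps}
      \<le> emeasure M {x \<in> space M. 1 \<le> ennreal (exp (- lam * eps^2)) * ennreal (exp (lam * (Y x)^2))}"
  proof (rule emeasure_mono)
    show "{x \<in> space M. Y x > eps}
        \<subseteq> {x \<in> space M. 1 \<le> ennreal (exp (- lam * eps^2)) * ennreal (exp (lam * (Y x)^2))}"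
    proof safe
      fix x assume "x \<in> space M" "Y x > eps"
      then have "eps^2 \<le> (Y x)^2" using assms(4) by (intro power_mono) auto
      then have "0 \<le> - lam * eps^2 + lam * (Y x)^2"
        using assms(3) by (simp add: algebra_simps mult_left_mono)
      then have "1 \<le> exp (- lam * eps^2) * exp (lam * (Y x)^2)" by (simp add: exp_add[symmetric])
      then show "1 \<le> ennreal (exp (- lam * eps^2)) * ennreal (exp (lam * (Y x)^2))"
        by (simp add: ennreal_mult[symmetric] ennreal_1[symmetric] del: ennreal_1)
    qed
  qed (use assms(2) in measurable)
  also have "\<dots> \<le> ennreal (exp (- lam * eps^2)) * (\<integral>\<^sup>+ x. ennreal (exp (lam * (Y x)^2)) * indicator (space M) x \<partial>M)"
    by (rule nn_integral_Markov_inequality) (use assms(2) in auto)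
  also have "\<dots> \<le> ennreal (exp (- lam * eps^2)) * ennreal K"
  proof -
    have "(\<integral>\<^sup>+ x. ennreal (exp (lam * (Y x)^2)) * indicator (space M) x \<partial>M)
        = (\<integral>\<^sup>+ x. ennreal (exp (lam * (Y x)^2)) \<partial>M)"
      by (rule nn_integral_cong) simp
    then show ?thesis using assms(6) by (simp add: mult_left_mono)
  qed
  finally have "emeasure M {x \<in> space M. Y x > eps} \<le> ennreal (K * exp (- lam * eps^2))"
    using assms(5) by (simp add: ennreal_mult mult.commute)
  then show ?thesis
    using assms(5) by (simp add: P.emeasure_eq_measure ennreal_le_iff)
qed

lemma ky_fan_dist_le:
  assumes "eps > 0" "measure M {x \<in> space M. norm (X x - Y x) > eps} < eps"
  shows "ky_fan_dist M X Y \<le> eps"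
  unfolding ky_fan_dist_def
  by (rule cInf_lower) (use assms in \<open>auto intro: bdd_belowI[of _ 0]\<close>)

(* Almost surely equal random vectors are at Ky Fan distance at most 0: every eps > 0 is
   admissible, since the exceptional set is null. *)
lemma ky_fan_dist_AE_eq:
  fixes X Y :: "'a \<Rightarrow> 'b::euclidean_space"
  assumes "X \<in> borel_measurable M" "Y \<in> borel_measurable M" "AE x in M. X x = Y x"
  shows "ky_fan_dist M X Y \<le> 0"
proof (rule field_le_epsilon)
  fix eps :: real assume "eps > 0"
  let ?N = "{x \<in> space M. norm (X x - Y x) > eps}"
  have "?N \<in> sets M" using assms(1,2) by measurable
  moreover have "AE x in M. x \<notin> ?N"
    using assms(3) by eventually_elim (use \<open>eps > 0\<close> in simp)
  ultimately have "?N \<in> null_sets M" by (simp add: AE_iff_null_sets)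
  then have "measure M {x \<in> space M. norm (X x - Y x) > eps} < eps"
    using \<open>eps > 0\<close> by (simp add: measure_eq_0_null_sets)
  then show "ky_fan_dist M X Y \<le> 0 + eps"
    using ky_fan_dist_le[OF \<open>eps > 0\<close>] by simp
qed

(* For 0 < u < 1/e the tail bound sqrt 2 * u is strictly below sqrt(-u ln u):
   squaring, this is 2u < -ln u, and indeed 2u < 2/e < 1 < -ln u. *)
lemma sqrt2_mult_lt_sqrt_entropy:
  fixes u :: real
  assumes "0 < u" "u < 1 / exp 1"
  shows "sqrt 2 * u < sqrt (- u * ln u)"
proof -
  have ln_u: "ln u < -1"
  proof -
    have "ln u < ln (1 / exp 1)" using assms by (subst ln_less_cancel_iff) auto
    then show ?thesis by (simp add: ln_div)
  qed
  have "2 * u < 1"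
  proof -
    have "2 * u < 2 / exp 1" using assms by simp
    also have "\<dots> \<le> 1" using exp_ge_add_one_self[of "1::real"] by simp
    finally show ?thesis .
  qed
  have "(sqrt 2 * u)^2 < - u * ln u"
  proof -
    have "(sqrt 2 * u)^2 = u * (2 * u)" by (simp add: power_mult_distrib power2_eq_square)
    also have "\<dots> < u * (- ln u)" using \<open>2 * u < 1\<close> assms ln_u by (intro mult_strict_left_mono) auto
    finally show ?thesis by simp
  qed
  then show ?thesis by (intro real_less_rsqrt)
qed

section \<open>Exponential moment of a Gaussian vector\<close>

lemma gaussian_coordinate_degenerate:
  fixes \<xi> :: "'a \<Rightarrow> real^'p"
  assumes "prob_space M" "gaussian_vector M \<xi> \<mu> \<Sigma>" "\<Sigma>$i$i = 0"
  shows "AE x in M. \<xi> x $ i = \<mu> $ i"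
proof -
  have "AE x in M. \<xi> x $ i - \<mu> $ i = 0"
    using gaussian_vector_measurable[OF assms(2)]
    by (intro char_one_imp_AE_zero assms(1)) (simp_all add: gaussian_coordinate_char[OF assms(2)] assms(3))
  then show ?thesis by simp
qed

(* With zero trace all (nonnegative) variances vanish, so the vector equals its mean a.s. *)
lemma gaussian_vector_trace_zero:
  fixes \<xi> :: "'a \<Rightarrow> real^'p"
  assumes "prob_space M" "\<forall>v :: real^'p. 0 \<le> v \<bullet> (\<Sigma> *v v)"
    and "gaussian_vector M \<xi> \<mu> \<Sigma>" "trace \<Sigma> = 0"
  shows "AE x in M. \<xi> x = \<mu>"
proof -
  have "\<Sigma>$i$i = 0" for i
    using assms(4) psd_diagonal_nonneg[OF assms(2)]
    by (simp add: trace_def sum_nonneg_eq_0_iff)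
  then have "AE x in M. \<forall>i\<in>UNIV. \<xi> x $ i = \<mu> $ i"
    using gaussian_coordinate_degenerate[OF assms(1,3)] by (intro AE_finite_allI) auto
  then show ?thesis by eventually_elim (simp add: vec_eq_iff)
qed

(* Sub-Gaussian moment bound E exp(|xi - mu|^2 / (4 trace Sigma)) <= sqrt 2.  Almost surely
   |xi - mu|^2/(4s) is the convex combination, with weights Sigma_ii/s over the coordinates of
   positive variance, of (xi_i - mu_i)^2/(4 Sigma_ii), each of exponential moment <= sqrt 2. *)
lemma gaussian_vector_exp_square_moment:
  fixes \<xi> :: "'a \<Rightarrow> real^'p"
  assumes "prob_space M" "\<forall>v :: real^'p. 0 \<le> v \<bullet> (\<Sigma> *v v)"
    and "gaussian_vector M \<xi> \<mu> \<Sigma>" "trace \<Sigma> > 0"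
  shows "(\<integral>\<^sup>+ x. ennreal (exp ((norm (\<xi> x - \<mu>))^2 / (4 * trace \<Sigma>))) \<partial>M) \<le> ennreal (sqrt 2)"
proof -
  note \<xi>_meas[measurable] = gaussian_vector_measurable[OF assms(3)]
  define s where "s = trace \<Sigma>"
  define I where "I = {i. \<Sigma>$i$i > 0}"
  define w where "w i = \<Sigma>$i$i / s" for i
  define f where "f i x = (\<xi> x $ i - \<mu> $ i)^2 / (4 * \<Sigma>$i$i)" for i x
  have diag_nonneg: "\<And>i. 0 \<le> \<Sigma>$i$i" using psd_diagonal_nonneg[OF assms(2)] .
  have s_pos: "s > 0" using assms(4) by (simp add: s_def)
  have s_sum: "s = (\<Sum>i\<in>I. \<Sigma>$i$i)"
    unfolding s_def trace_def I_def using diag_nonneg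
    by (intro sum.mono_neutral_right) (auto simp: less_le)
  have w_sum: "sum w I = 1"
    using s_pos by (simp add: w_def s_sum[symmetric] sum_divide_distrib[symmetric])
  have "AE x in M. \<forall>i\<in>UNIV - I. \<xi> x $ i = \<mu> $ i"
    using gaussian_coordinate_degenerate[OF assms(1,3)] diag_nonneg
    by (intro AE_finite_allI) (auto simp: I_def less_le)
  then have AE_comb: "AE x in M. (norm (\<xi> x - \<mu>))^2 / (4 * s) = (\<Sum>i\<in>I. w i * f i x)"
  proof eventually_elim
    case (elim x)
    have "(norm (\<xi> x - \<mu>))^2 = (\<Sum>i\<in>UNIV. (\<xi> x $ i - \<mu> $ i)^2)"
      by (simp only: power2_norm_eq_inner) (simp add: inner_vec_def power2_eq_square)
    also have "\<dots> = (\<Sum>i\<in>I. (\<xi> x $ i - \<mu> $ i)^2)"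
      using elim by (intro sum.mono_neutral_right) auto
    finally show ?case
      using s_pos by (simp add: sum_divide_distrib w_def f_def I_def mult.commute)
  qed
  have "(\<integral>\<^sup>+ x. ennreal (exp ((norm (\<xi> x - \<mu>))^2 / (4 * s))) \<partial>M)
      = (\<integral>\<^sup>+ x. ennreal (exp (\<Sum>i\<in>I. w i * f i x)) \<partial>M)"
    using AE_comb by (intro nn_integral_cong_AE) auto
  also have "\<dots> \<le> ennreal (sqrt 2)"
  proof (rule nn_integral_exp_convex_comb_le)
    fix i assume "i \<in> I"
    then have pos: "\<Sigma>$i$i > 0" by (simp add: I_def)
    then show "w i \<ge> 0" using s_pos by (simp add: w_def)
    show "f i \<in> borel_measurable M" unfolding f_def by measurable
    have "(\<integral>\<^sup>+ x. ennreal (exp ((1 / (4 * \<Sigma>$i$i)) * (\<xi> x $ i - \<mu> $ i)^2)) \<partial>M) \<le> ennreal (sqrt 2)"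
      using pos gaussian_coordinate_char[OF assms(3)]
      by (intro normal_exp_square_moment_le[OF assms(1)]) auto
    then show "(\<integral>\<^sup>+ x. ennreal (exp (f i x)) \<partial>M) \<le> ennreal (sqrt 2)"
      by (simp add: f_def)
  qed (simp_all add: w_sum)
  finally show ?thesis by (simp add: s_def)
qed

theorem mainTheorem6:
  fixes M :: "'a measure" and \<xi> :: "'a \<Rightarrow> real^'p"
    and \<mu> :: "real^'p" and \<Sigma> :: "real^'p^'p"
  assumes "prob_space M"
    and "transpose \<Sigma> = \<Sigma>"
    and "\<forall>v :: real^'p. 0 \<le> v \<bullet> (\<Sigma> *v v)"
    and "gaussian_vector M \<xi> \<mu> \<Sigma>"
    and "trace \<Sigma> < 1 / (4 * exp 1)"
  shows "ky_fan_dist M \<xi> (\<lambda>_. \<mu>) \<le> sqrt (- 4 * trace \<Sigma> * ln (4 * trace \<Sigma>))"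
proof -
  note \<xi>_meas[measurable] = gaussian_vector_measurable[OF assms(4)]
  have "trace \<Sigma> \<ge> 0"
    unfolding trace_def using psd_diagonal_nonneg[OF assms(3)] by (intro sum_nonneg) auto
  then consider "trace \<Sigma> = 0" | "trace \<Sigma> > 0" by linarith
  then show ?thesis
  proof cases
    case 1
    then have "AE x in M. \<xi> x = \<mu>" by (rule gaussian_vector_trace_zero[OF assms(1,3,4)])
    then show ?thesis using ky_fan_dist_AE_eq[OF \<xi>_meas] 1 by simp
  next
    case 2
    define u where "u = 4 * trace \<Sigma>"
    define eps where "eps = sqrt (- u * ln u)"
    have u: "0 < u" "u < 1 / exp 1" using 2 assms(5) by (simp_all add: u_def field_simps)
    have eps_gt: "sqrt 2 * u < eps" unfolding eps_def by (rule sqrt2_mult_lt_sqrt_entropy[OF u])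
    moreover have "0 < sqrt 2 * u" using u by simp
    ultimately have "eps > 0" by linarith
    then have "exp (- (1 / u) * eps^2) = u" using u by (simp add: eps_def)
    moreover have "measure M {x \<in> space M. norm (\<xi> x - \<mu>) > eps} \<le> sqrt 2 * exp (- (1 / u) * eps^2)"
    proof (rule tail_le_exp_square_moment[OF assms(1)])
      show "(\<lambda>x. norm (\<xi> x - \<mu>)) \<in> borel_measurable M" by measurable
      show "(\<integral>\<^sup>+ x. ennreal (exp (1 / u * (norm (\<xi> x - \<mu>))^2)) \<partial>M) \<le> ennreal (sqrt 2)"
        using gaussian_vector_exp_square_moment[OF assms(1,3,4) 2] by (simp add: u_def)
    qed (use u \<open>eps > 0\<close> in auto)
    ultimately have "ky_fan_dist M \<xi> (\<lambda>_. \<mu>) \<le> eps"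
      using eps_gt \<open>eps > 0\<close> by (intro ky_fan_dist_le) auto
    then show ?thesis by (simp add: eps_def u_def)
  qed
qed

end
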